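(* Let $p,r\in[0,1]$. Let $B_1,\dots,B_k$ be barriers, let $U=\bigcup_{i=1}^k int(B_i)$ and $V=\bigcap_{i=1}^k ext(B_i)$ (with $k,l,m,n\ge 0$ integers). Let $e_1,\dots,e_l$ be edges in $U$ with prescribed states $s_1,\dots,s_l\in\{0,1\}$, let $u_1,\dots,u_m$ be vertices in $U$ with prescribed colours $c_1,\dots,c_m\in\{0,1\}$, let $v_1,\dots,v_n$ be vertices in $V$ and let $\kappa\in\{0,1\}$. Let $I$ be the event that all edges of $B_1,\dots,B_k$ are closed, $Y(e_i)=s_i$ for all $i$, $X(u_j)=c_j$ for all $j$, and $X(v_1)=\dots=X(v_n)=\kappa$, and suppose $\mathbb{P}_{p,r}(I)>0$. Then the conditional distribution under $\mathbb{P}_{p,r}(\cdot\mid I)$ of the states of the edges in $V$ stochastically dominates the product Bernoulli($p$) measure $\nu_p$ on these edges.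
   Context: DaC model on the square lattice: $\mathbb{Z}^2$ with nearest-neighbour edge set $\mathcal{E}^2$; $Y\in\{0,1\}^{\mathcal{E}^2}$ i.i.d. Bernoulli($p$) edge states (1 = open), law $\nu_p$; $p$-clusters are connected components of the open-edge graph; each $p$-cluster independently coloured black (1) with probability $r$, white (0) with probability $1-r$, giving $X\in\{0,1\}^{\mathbb{Z}^2}$; $\mathbb{P}_{p,r}$ is the joint law. A barrier is a finite edge set $E$ whose removal (keeping end-vertices) splits $(\mathbb{Z}^2,\mathcal{E}^2)$ into two or more connected subgraphs, exactly one of which is infinite; $ext(E)$ is the infinite component and $int(E)$ is the union of the finite components. "Edges in $U$" / "edges in $V$" are edges of the corresponding subgraphs (both endpoints in the set, edge not in any $B_i$). A barrier is closed if all its edges are closed. *)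

theory Defs
  imports "HOL-Probability.Probability" "HOL-Library.Countable"
begin

type_synonym vertex = "int \<times> int"
type_synonym edge = "vertex \<times> vertex"

text \<open>Each nearest-neighbour edge is represented once, oriented from a vertex
  to its right or upper neighbour.\<close>
definition E2 :: "edge set" where
  "E2 = {(a, b). b = (fst a + 1, snd a) \<or> b = (fst a, snd a + 1)}"

definition adj :: "edge set \<Rightarrow> vertex rel" where
  "adj F = {(a, b). (a, b) \<in> F \<or> (b, a) \<in> F}"

definition component :: "edge set \<Rightarrow> vertex \<Rightarrow> vertex set" where
  "component F x = {y. (x, y) \<in> (adj F)\<^sup>*}"

definition components :: "edge set \<Rightarrow> vertex set set" where
  "components F = range (component F)"

definition barrier :: "edge set \<Rightarrow> bool" where
  "barrier E \<longleftrightarrow> finite E \<and> E \<subseteq> E2 \<and>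
     (\<exists>C D. C \<in> components (E2 - E) \<and> D \<in> components (E2 - E) \<and> C \<noteq> D) \<and>
     (\<exists>!C. C \<in> components (E2 - E) \<and> infinite C)"

definition extB :: "edge set \<Rightarrow> vertex set" where
  "extB E = (THE C. C \<in> components (E2 - E) \<and> infinite C)"

definition intB :: "edge set \<Rightarrow> vertex set" where
  "intB E = \<Union>{C \<in> components (E2 - E). finite C}"

text \<open>Bernoulli measure on bool (True = open / black).\<close>
definition bern :: "real \<Rightarrow> bool measure" where
  "bern q = measure_pmf (bernoulli_pmf q)"

definition nu :: "real \<Rightarrow> edge set \<Rightarrow> (edge \<Rightarrow> bool) measure" where
  "nu p S = PiM S (\<lambda>_. bern p)"

definition cluster :: "(edge \<Rightarrow> bool) \<Rightarrow> vertex \<Rightarrow> vertex set" where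
  "cluster Y v = component {e \<in> E2. Y e} v"

definition rep :: "vertex set \<Rightarrow> vertex" where
  "rep C = from_nat (LEAST n. n \<in> to_nat ` C)"

text \<open>Sample space: edge states (iid Bernoulli p) and auxiliary vertex colours
  (iid Bernoulli r); each cluster receives the auxiliary colour of its
  representative, so distinct clusters are independently coloured black with
  probability r. This realises the joint law P_{p,r} of (Y, X).\<close>
definition DaC :: "real \<Rightarrow> real \<Rightarrow> ((edge \<Rightarrow> bool) \<times> (vertex \<Rightarrow> bool)) measure" where
  "DaC p r = pair_measure (PiM E2 (\<lambda>_. bern p)) (PiM UNIV (\<lambda>_. bern r))"

definition Ystate :: "(edge \<Rightarrow> bool) \<times> (vertex \<Rightarrow> bool) \<Rightarrow> edge \<Rightarrow> bool" where
  "Ystate \<omega> e = fst \<omega> e"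

definition Xcol :: "(edge \<Rightarrow> bool) \<times> (vertex \<Rightarrow> bool) \<Rightarrow> vertex \<Rightarrow> bool" where
  "Xcol \<omega> v = snd \<omega> (rep (cluster (fst \<omega>) v))"

definition increasing_event :: "'i set \<Rightarrow> ('i \<Rightarrow> bool) set \<Rightarrow> bool" where
  "increasing_event S A \<longleftrightarrow>
     (\<forall>x\<in>A. \<forall>y\<in>(S \<rightarrow>\<^sub>E UNIV). (\<forall>i\<in>S. x i \<longrightarrow> y i) \<longrightarrow> y \<in> A)"

definition stoch_dom :: "'i set \<Rightarrow> ('i \<Rightarrow> bool) measure \<Rightarrow> ('i \<Rightarrow> bool) measure \<Rightarrow> bool" where
  "stoch_dom S mu nu' \<longleftrightarrow>
     (\<forall>A \<in> sets (PiM S (\<lambda>_. count_space (UNIV :: bool set))).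
        increasing_event S A \<longrightarrow> measure nu' A \<le> measure mu A)"

end

theory Submission
  imports Defs
begin

(* Write Z for the restriction of the edge configuration to the edges SV
   of V, and W for the complementary edge set E2 - SV.  Since every barrier is closed on
   the event I, a p-cluster meeting V never leaves V and uses only SV-edges, while a
   p-cluster of a vertex of U uses only W-edges.  Integrating out the independent cluster
   colours therefore factorises the joint law:
     P(I, Z \<in> A) = (\<integral> g(w) dw) * \<integral>_A f(x) d\<nu>_p(x),
   where g depends only on the W-edges and f(x) = \<rho>^N(x), with \<rho> = P(colour = \<kappa>) and N(x)
   the number of distinct open SV-clusters containing v_1, ..., v_n.  N is decreasing in x,
   so f is increasing, and Harris' inequality \<nu>_p(A) \<integral> f \<le> \<integral>_A f for increasing A yields
   P(Z \<in> A | I) \<ge> \<nu>_p(A). *)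

lemma prob_space_bern [simp]: "prob_space (bern q)"
  unfolding bern_def by (rule prob_space_measure_pmf)

lemma space_bern [simp]: "space (bern q) = UNIV"
  unfolding bern_def by simp

lemma sets_bern [simp]: "sets (bern q) = UNIV"
  unfolding bern_def by simp

lemma space_PiM_bern [simp]: "space (PiM S (\<lambda>_. bern q)) = S \<rightarrow>\<^sub>E UNIV"
  by (simp add: space_PiM)

lemma prob_space_PiM_bern: "prob_space (PiM S (\<lambda>_. bern q))"
  by (rule prob_space_PiM) simp

lemma distr_merge_PiM:
  assumes M: "\<And>i. i \<in> I \<union> J \<Longrightarrow> prob_space (M i)" and IJ: "I \<inter> J = {}"
  shows "distr (PiM I M \<Otimes>\<^sub>M PiM J M) (PiM (I \<union> J) M) (merge I J) = PiM (I \<union> J) M"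
proof (rule measure_eqI_PiM_infinite[symmetric, OF refl])
  interpret PI: prob_space "PiM I M" using M by (intro prob_space_PiM) auto
  interpret PJ: prob_space "PiM J M" using M by (intro prob_space_PiM) auto
  interpret PIJ: prob_space "PiM (I \<union> J) M" using M by (intro prob_space_PiM) auto
  interpret pair_sigma_finite "PiM I M" "PiM J M" ..
  show "finite_measure (PiM (I \<union> J) M)" by unfold_locales
  show "sets (distr (PiM I M \<Otimes>\<^sub>M PiM J M) (PiM (I \<union> J) M) (merge I J)) = sets (PiM (I \<union> J) M)"
    by simp
  fix K A assume K: "finite K" "K \<subseteq> I \<union> J" and A: "\<And>i. i \<in> K \<Longrightarrow> A i \<in> sets (M i)"
  let ?X = "prod_emb (I \<union> J) M K (Pi\<^sub>E K A)"
  let ?XI = "prod_emb I M (K \<inter> I) (Pi\<^sub>E (K \<inter> I) A)"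
  let ?XJ = "prod_emb J M (K \<inter> J) (Pi\<^sub>E (K \<inter> J) A)"
  have "PiM (I \<union> J) M ?X = (\<Prod>i\<in>K. M i (A i))"
    using M K A by (intro emeasure_PiM_emb) auto
  also have "\<dots> = (\<Prod>i\<in>K \<inter> I. M i (A i)) * (\<Prod>i\<in>K \<inter> J. M i (A i))"
  proof -
    have "K = (K \<inter> I) \<union> (K \<inter> J)" using K by auto
    then have "(\<Prod>i\<in>K. M i (A i)) = (\<Prod>i\<in>(K \<inter> I) \<union> (K \<inter> J). M i (A i))" by simp
    also have "\<dots> = (\<Prod>i\<in>K \<inter> I. M i (A i)) * (\<Prod>i\<in>K \<inter> J. M i (A i))"
      using K IJ by (intro prod.union_disjoint) auto
    finally show ?thesis .
  qed
  also have "(\<Prod>i\<in>K \<inter> I. M i (A i)) = PiM I M ?XI"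
    using M K A by (intro emeasure_PiM_emb[symmetric]) auto
  also have "(\<Prod>i\<in>K \<inter> J. M i (A i)) = PiM J M ?XJ"
    using M K A by (intro emeasure_PiM_emb[symmetric]) auto
  also have "PiM I M ?XI * PiM J M ?XJ = (PiM I M \<Otimes>\<^sub>M PiM J M) (?XI \<times> ?XJ)"
    using K A by (intro PJ.emeasure_pair_measure_Times[symmetric] sets_PiM_I) auto
  also have "?XI \<times> ?XJ = merge I J -` ?X \<inter> space (PiM I M \<Otimes>\<^sub>M PiM J M)"
    using IJ K unfolding set_eq_iff
    by (auto simp: prod_emb_def space_pair_measure space_PiM PiE_iff merge_def extensional_def split: if_splits)
  finally show "PiM (I \<union> J) M ?X = distr (PiM I M \<Otimes>\<^sub>M PiM J M) (PiM (I \<union> J) M) (merge I J) ?X"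
    using K A by (subst emeasure_distr) (auto intro!: sets_PiM_I)
qed

section \<open>Harris' inequality for product Bernoulli measures\<close>

definition unit_increasing :: "'i set \<Rightarrow> (('i \<Rightarrow> bool) \<Rightarrow> real) \<Rightarrow> bool" where
  "unit_increasing S f \<longleftrightarrow> (\<forall>x\<in>S \<rightarrow>\<^sub>E UNIV. 0 \<le> f x \<and> f x \<le> 1) \<and>
     (\<forall>x\<in>S \<rightarrow>\<^sub>E UNIV. \<forall>y\<in>S \<rightarrow>\<^sub>E UNIV. (\<forall>i\<in>S. x i \<longrightarrow> y i) \<longrightarrow> f x \<le> f y)"

definition determined_by :: "'i set \<Rightarrow> 'i set \<Rightarrow> (('i \<Rightarrow> bool) \<Rightarrow> 'a) \<Rightarrow> bool" where
  "determined_by S T f \<longleftrightarrow> (\<forall>x\<in>S \<rightarrow>\<^sub>E UNIV. \<forall>y\<in>S \<rightarrow>\<^sub>E UNIV. (\<forall>i\<in>T. x i = y i) \<longrightarrow> f x = f y)"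

lemma unit_increasing_bounds:
  "unit_increasing S f \<Longrightarrow> x \<in> S \<rightarrow>\<^sub>E UNIV \<Longrightarrow> 0 \<le> f x \<and> f x \<le> 1"
  unfolding unit_increasing_def by blast

lemma unit_increasing_mono:
  "unit_increasing S f \<Longrightarrow> x \<in> S \<rightarrow>\<^sub>E UNIV \<Longrightarrow> y \<in> S \<rightarrow>\<^sub>E UNIV \<Longrightarrow>
    (\<And>i. i \<in> S \<Longrightarrow> x i \<Longrightarrow> y i) \<Longrightarrow> f x \<le> f y"
  unfolding unit_increasing_def by blast

lemma determined_byD:
  "determined_by S T f \<Longrightarrow> x \<in> S \<rightarrow>\<^sub>E UNIV \<Longrightarrow> y \<in> S \<rightarrow>\<^sub>E UNIV \<Longrightarrow>
    (\<And>i. i \<in> T \<Longrightarrow> x i = y i) \<Longrightarrow> f x = f y"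
  unfolding determined_by_def by blast

lemma unit_increasing_indicator:
  "increasing_event S A \<Longrightarrow> unit_increasing S (indicator A)"
  unfolding unit_increasing_def increasing_event_def by (auto simp: indicator_def)

text \<open>A function determined by finitely many coordinates is measurable: it factors
  through the restriction to a finite, discrete product.\<close>
lemma determined_by_measurable:
  fixes \<phi> :: "('i \<Rightarrow> bool) \<Rightarrow> real"
  assumes T: "finite T" "T \<subseteq> S" and dep: "determined_by S T \<phi>"
  shows "\<phi> \<in> borel_measurable (PiM S (\<lambda>_. bern q))"
proof -
  have m1: "\<phi> \<in> borel_measurable (PiM T (\<lambda>_. bern q))"
  proof (rule measurableI)
    fix A :: "real set"
    have fin: "finite (space (PiM T (\<lambda>_. bern q)))" using T by (simp add: finite_PiE)
    show "\<phi> -` A \<inter> space (PiM T (\<lambda>_. bern q)) \<in> sets (PiM T (\<lambda>_. bern q))"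
    proof (rule sets.countable)
      fix a assume "a \<in> \<phi> -` A \<inter> space (PiM T (\<lambda>_. bern q))"
      then have "{a} = Pi\<^sub>E T (\<lambda>i. {a i})" by (auto simp: PiE_iff extensional_def)
      then show "{a} \<in> sets (PiM T (\<lambda>_. bern q))" using T by (metis sets_PiM_I_finite sets_bern UNIV_I)
    next
      show "countable (\<phi> -` A \<inter> space (PiM T (\<lambda>_. bern q)))"
        using fin by (meson countable_finite finite_Int)
    qed
  qed auto
  have meas: "(\<lambda>x. \<phi> (restrict x T)) \<in> borel_measurable (PiM S (\<lambda>_. bern q))"
    using measurable_compose[OF measurable_restrict_subset[OF T(2)] m1] .
  have eq: "\<phi> (restrict x T) = \<phi> x" if x: "x \<in> S \<rightarrow>\<^sub>E UNIV" for x
  proof -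
    have "restrict x T \<in> S \<rightarrow>\<^sub>E UNIV" using T(2) by (auto simp: PiE_iff extensional_def)
    moreover have "\<forall>i\<in>T. restrict x T i = x i" by simp
    ultimately show ?thesis using dep x unfolding determined_by_def by blast
  qed
  show ?thesis using meas by (rule measurable_cong[THEN iffD1, rotated]) (simp add: eq)
qed

lemma integrable_unit_bounded:
  fixes h :: "('i \<Rightarrow> bool) \<Rightarrow> real"
  assumes "h \<in> borel_measurable (PiM S (\<lambda>_. bern p))"
    and "\<And>x. x \<in> S \<rightarrow>\<^sub>E UNIV \<Longrightarrow> 0 \<le> h x \<and> h x \<le> 1"
  shows "integrable (PiM S (\<lambda>_. bern p)) h"
proof -
  interpret prob_space "PiM S (\<lambda>_. bern p)" by (rule prob_space_PiM_bern)
  show ?thesis by (rule integrable_const_bound[where B=1]) (use assms in auto)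
qed

lemma harris_bern:
  fixes F G :: "bool \<Rightarrow> real"
  assumes p: "0 \<le> p" "p \<le> 1" and F: "F False \<le> F True" and G: "G False \<le> G True"
  shows "(\<integral>b. F b \<partial>bern p) * (\<integral>b. G b \<partial>bern p) \<le> (\<integral>b. F b * G b \<partial>bern p)"
proof -
  have "(\<integral>b. F b * G b \<partial>bern p) - (\<integral>b. F b \<partial>bern p) * (\<integral>b. G b \<partial>bern p)
     = p * (1 - p) * ((F True - F False) * (G True - G False))"
    using p unfolding bern_def by (simp add: algebra_simps power2_eq_square)
  moreover have "0 \<le> p * (1 - p) * ((F True - F False) * (G True - G False))"
    using p F G by (intro mult_nonneg_nonneg) auto
  ultimately show ?thesis by linarith
qed

lemma PiE_upd: "i \<in> S \<Longrightarrow> X \<in> (S - {i}) \<rightarrow>\<^sub>E UNIV \<Longrightarrow> X(i := b) \<in> S \<rightarrow>\<^sub>E UNIV"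
  by (auto simp: PiE_iff extensional_def)

lemma PiM_upd_measurable:
  assumes "i \<in> S"
  shows "(\<lambda>X. X(i := b)) \<in> measurable (PiM (S - {i}) (\<lambda>_. bern p)) (PiM S (\<lambda>_. bern p))"
proof -
  have "(\<lambda>X. (id X)(i := (\<lambda>_. b) X)) \<in> measurable (PiM (S - {i}) (\<lambda>_. bern p)) (PiM S (\<lambda>_. bern p))"
    by (rule measurable_fun_upd[where J="S - {i}"]) (use assms in auto)
  then show ?thesis by simp
qed

lemma integral_PiM_split:
  fixes h :: "('i \<Rightarrow> bool) \<Rightarrow> real"
  assumes i: "i \<in> S" and h: "h \<in> borel_measurable (PiM S (\<lambda>_. bern p))"
    and hb: "\<And>x. x \<in> S \<rightarrow>\<^sub>E UNIV \<Longrightarrow> 0 \<le> h x \<and> h x \<le> 1"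
  shows "(\<integral>x. h x \<partial>PiM S (\<lambda>_. bern p)) =
         (\<integral>b. (\<integral>X. h (X(i := b)) \<partial>PiM (S - {i}) (\<lambda>_. bern p)) \<partial>bern p)"
proof -
  let ?P = "PiM (S - {i}) (\<lambda>_. bern p)"
  let ?u = "\<lambda>(b, X). X(i := b)"
  interpret P: prob_space ?P by (rule prob_space_PiM_bern)
  interpret B: prob_space "bern p" by simp
  interpret PR: pair_prob_space "bern p" ?P ..
  have d: "distr (bern p \<Otimes>\<^sub>M ?P) (PiM S (\<lambda>_. bern p)) ?u = PiM S (\<lambda>_. bern p)"
  proof -
    have "insert i (S - {i}) = S" using i by auto
    then show ?thesis using distr_pair_PiM_eq_PiM[of "S - {i}" "\<lambda>_. bern p" i] by simp
  qed
  have m: "?u \<in> measurable (bern p \<Otimes>\<^sub>M ?P) (PiM S (\<lambda>_. bern p))"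
  proof -
    have "(\<lambda>z. (snd z)(i := fst z)) \<in> measurable (bern p \<Otimes>\<^sub>M ?P) (PiM S (\<lambda>_. bern p))"
      by (rule measurable_fun_upd[where J="S - {i}"]) (use i in auto)
    then show ?thesis by (simp add: case_prod_beta')
  qed
  have int: "integrable (bern p \<Otimes>\<^sub>M ?P) (\<lambda>z. h (?u z))"
  proof (rule PR.integrable_const_bound[where B=1])
    show "AE z in bern p \<Otimes>\<^sub>M ?P. norm (h (?u z)) \<le> 1"
      using hb measurable_space[OF m] by auto
    show "(\<lambda>z. h (?u z)) \<in> borel_measurable (bern p \<Otimes>\<^sub>M ?P)"
      using m h by (rule measurable_compose)
  qed
  have "(\<integral>x. h x \<partial>PiM S (\<lambda>_. bern p)) = (\<integral>z. h (?u z) \<partial>(bern p \<Otimes>\<^sub>M ?P))"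
    by (subst d[symmetric]) (rule integral_distr[OF m], simp add: d h)
  also have "\<dots> = (\<integral>b. (\<integral>X. h (X(i := b)) \<partial>?P) \<partial>bern p)"
    using PR.integral_fst'[OF int] by simp
  finally show ?thesis .
qed

lemma unit_increasing_section:
  assumes f: "unit_increasing S f" and i: "i \<in> S"
  shows "unit_increasing (S - {i}) (\<lambda>X. f (X(i := b)))"
  unfolding unit_increasing_def
proof (intro conjI ballI impI)
  fix x :: "_ \<Rightarrow> bool" assume "x \<in> (S - {i}) \<rightarrow>\<^sub>E UNIV"
  then have "x(i := b) \<in> S \<rightarrow>\<^sub>E UNIV" by (rule PiE_upd[OF i])
  then show "0 \<le> f (x(i := b))" "f (x(i := b)) \<le> 1"
    using unit_increasing_bounds[OF f] by simp_all
next
  fix x y :: "_ \<Rightarrow> bool" assume x: "x \<in> (S - {i}) \<rightarrow>\<^sub>E UNIV" and y: "y \<in> (S - {i}) \<rightarrow>\<^sub>E UNIV"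
    and le: "\<forall>j\<in>S - {i}. x j \<longrightarrow> y j"
  show "f (x(i := b)) \<le> f (y(i := b))"
    by (rule unit_increasing_mono[OF f PiE_upd[OF i x] PiE_upd[OF i y]]) (use le in auto)
qed

lemma determined_by_section:
  assumes f: "determined_by S (insert i T) f" and i: "i \<in> S"
  shows "determined_by (S - {i}) T (\<lambda>X. f (X(i := b)))"
  unfolding determined_by_def
proof (intro ballI impI)
  fix x y :: "_ \<Rightarrow> bool" assume x: "x \<in> (S - {i}) \<rightarrow>\<^sub>E UNIV" and y: "y \<in> (S - {i}) \<rightarrow>\<^sub>E UNIV"
    and eq: "\<forall>j\<in>T. x j = y j"
  show "f (x(i := b)) = f (y(i := b))"
    by (rule determined_byD[OF f PiE_upd[OF i x] PiE_upd[OF i y]]) (use eq in auto)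
qed

lemma section_integral_mono:
  assumes f: "unit_increasing S f" "f \<in> borel_measurable (PiM S (\<lambda>_. bern p))" and i: "i \<in> S"
  shows "(\<integral>X. f (X(i := False)) \<partial>PiM (S - {i}) (\<lambda>_. bern p))
       \<le> (\<integral>X. f (X(i := True)) \<partial>PiM (S - {i}) (\<lambda>_. bern p))"
proof (rule integral_mono)
  have int: "integrable (PiM (S - {i}) (\<lambda>_. bern p)) (\<lambda>X. f (X(i := b)))" for b
  proof (rule integrable_unit_bounded)
    show "(\<lambda>X. f (X(i := b))) \<in> borel_measurable (PiM (S - {i}) (\<lambda>_. bern p))"
      using PiM_upd_measurable[OF i] f(2) by (rule measurable_compose)
    show "0 \<le> f (X(i := b)) \<and> f (X(i := b)) \<le> 1" if "X \<in> (S - {i}) \<rightarrow>\<^sub>E UNIV" for X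
      using unit_increasing_bounds[OF f(1) PiE_upd[OF i that]] .
  qed
  show "integrable (PiM (S - {i}) (\<lambda>_. bern p)) (\<lambda>X. f (X(i := False)))"
    "integrable (PiM (S - {i}) (\<lambda>_. bern p)) (\<lambda>X. f (X(i := True)))" by (fact int)+
  fix X :: "_ \<Rightarrow> bool" assume "X \<in> space (PiM (S - {i}) (\<lambda>_. bern p))"
  then have X: "X \<in> (S - {i}) \<rightarrow>\<^sub>E UNIV" by simp
  show "f (X(i := False)) \<le> f (X(i := True))"
    by (rule unit_increasing_mono[OF f(1) PiE_upd[OF i X] PiE_upd[OF i X]]) simp
qed

text \<open>The induction step of Harris' inequality: if it holds for all sections in which
  coordinate \<open>i\<close> is fixed, it holds for the full functions (Fubini along \<open>i\<close>, then the
  one-variable inequality applied to the increasing section integrals).\<close>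
lemma harris_coordinate_step:
  fixes f g :: "('i \<Rightarrow> bool) \<Rightarrow> real"
  assumes p: "0 \<le> p" "p \<le> 1" and i: "i \<in> S"
    and f: "unit_increasing S f" "f \<in> borel_measurable (PiM S (\<lambda>_. bern p))"
    and g: "unit_increasing S g" "g \<in> borel_measurable (PiM S (\<lambda>_. bern p))"
    and sections: "\<And>b. (\<integral>X. f (X(i := b)) \<partial>PiM (S - {i}) (\<lambda>_. bern p)) * (\<integral>X. g (X(i := b)) \<partial>PiM (S - {i}) (\<lambda>_. bern p))
        \<le> (\<integral>X. f (X(i := b)) * g (X(i := b)) \<partial>PiM (S - {i}) (\<lambda>_. bern p))"
  shows "(\<integral>x. f x \<partial>PiM S (\<lambda>_. bern p)) * (\<integral>x. g x \<partial>PiM S (\<lambda>_. bern p))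
      \<le> (\<integral>x. f x * g x \<partial>PiM S (\<lambda>_. bern p))"
proof -
  let ?P' = "PiM (S - {i}) (\<lambda>_. bern p)"
  define F where "F b = (\<integral>X. f (X(i := b)) \<partial>?P')" for b
  define G where "G b = (\<integral>X. g (X(i := b)) \<partial>?P')" for b
  define H where "H b = (\<integral>X. f (X(i := b)) * g (X(i := b)) \<partial>?P')" for b
  have "(\<integral>x. f x \<partial>PiM S (\<lambda>_. bern p)) * (\<integral>x. g x \<partial>PiM S (\<lambda>_. bern p))
      = (\<integral>b. F b \<partial>bern p) * (\<integral>b. G b \<partial>bern p)"
    unfolding F_def G_def
    using integral_PiM_split[OF i f(2) unit_increasing_bounds[OF f(1)]]
      integral_PiM_split[OF i g(2) unit_increasing_bounds[OF g(1)]]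
    by simp
  also have "\<dots> \<le> (\<integral>b. F b * G b \<partial>bern p)"
    using p section_integral_mono[OF f i] section_integral_mono[OF g i]
    unfolding F_def G_def by (intro harris_bern) auto
  also have "\<dots> \<le> (\<integral>b. H b \<partial>bern p)"
    using sections unfolding F_def G_def H_def
    by (intro integral_mono) (auto simp: bern_def intro!: integrable_measure_pmf_finite)
  also have "\<dots> = (\<integral>x. f x * g x \<partial>PiM S (\<lambda>_. bern p))"
    unfolding H_def using f g unit_increasing_bounds[OF f(1)] unit_increasing_bounds[OF g(1)]
    by (intro integral_PiM_split[OF i, symmetric]) (auto intro: mult_le_one)
  finally show ?thesis .
qed

lemma harris_finite:
  fixes f g :: "('i \<Rightarrow> bool) \<Rightarrow> real"
  assumes "finite T" "T \<subseteq> S" "0 \<le> p" "p \<le> 1"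
    and "unit_increasing S f" "determined_by S T f"
    and "unit_increasing S g" "g \<in> borel_measurable (PiM S (\<lambda>_. bern p))"
  shows "(\<integral>x. f x \<partial>PiM S (\<lambda>_. bern p)) * (\<integral>x. g x \<partial>PiM S (\<lambda>_. bern p))
      \<le> (\<integral>x. f x * g x \<partial>PiM S (\<lambda>_. bern p))"
  using assms
proof (induction T arbitrary: S f g rule: finite_induct)
  case (empty S f g)
  let ?P = "PiM S (\<lambda>_. bern p)"
  interpret P: prob_space ?P by (rule prob_space_PiM_bern)
  define x0 where "x0 = (\<lambda>i\<in>S. True)"
  have x0: "x0 \<in> S \<rightarrow>\<^sub>E UNIV" unfolding x0_def by auto
  have const: "f x = f x0" if "x \<in> space ?P" for x
    by (rule determined_byD[OF empty.prems(5)]) (use that x0 in auto)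
  have "(\<integral>x. f x \<partial>?P) = (\<integral>x. f x0 \<partial>?P)"
    by (rule Bochner_Integration.integral_cong[OF refl]) (metis const)
  moreover have "(\<integral>x. f x * g x \<partial>?P) = (\<integral>x. f x0 * g x \<partial>?P)"
    by (rule Bochner_Integration.integral_cong[OF refl]) (metis const)
  ultimately show ?case using P.prob_space by simp
next
  case (insert i T S f g)
  have TS: "insert i T \<subseteq> S" and p: "0 \<le> p" "p \<le> 1"
    and f_inc: "unit_increasing S f" and f_det: "determined_by S (insert i T) f"
    and g_inc: "unit_increasing S g" and gm: "g \<in> borel_measurable (PiM S (\<lambda>_. bern p))"
    using insert.prems by blast+
  have iS: "i \<in> S" using TS by auto
  have fm: "f \<in> borel_measurable (PiM S (\<lambda>_. bern p))"
    using determined_by_measurable[OF _ TS f_det] insert.hyps(1) by simp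
  show ?case
  proof (rule harris_coordinate_step[OF p iS f_inc fm g_inc gm])
    fix b
    show "(\<integral>X. f (X(i := b)) \<partial>PiM (S - {i}) (\<lambda>_. bern p)) * (\<integral>X. g (X(i := b)) \<partial>PiM (S - {i}) (\<lambda>_. bern p))
        \<le> (\<integral>X. f (X(i := b)) * g (X(i := b)) \<partial>PiM (S - {i}) (\<lambda>_. bern p))"
    proof (rule insert.IH)
      show "T \<subseteq> S - {i}" using TS insert.hyps(2) by auto
      show "unit_increasing (S - {i}) (\<lambda>X. f (X(i := b)))" "unit_increasing (S - {i}) (\<lambda>X. g (X(i := b)))"
        using unit_increasing_section[OF f_inc iS] unit_increasing_section[OF g_inc iS] .
      show "determined_by (S - {i}) T (\<lambda>X. f (X(i := b)))"
        by (rule determined_by_section[OF f_det iS])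
      show "(\<lambda>X. g (X(i := b))) \<in> borel_measurable (PiM (S - {i}) (\<lambda>_. bern p))"
        using PiM_upd_measurable[OF iS] gm by (rule measurable_compose)
    qed (use p in auto)
  qed
qed

lemma harris_limit:
  fixes fs :: "nat \<Rightarrow> ('i \<Rightarrow> bool) \<Rightarrow> real" and f :: "('i \<Rightarrow> bool) \<Rightarrow> real"
  assumes p: "0 \<le> p" "p \<le> 1"
    and A: "A \<in> sets (PiM S (\<lambda>_. bern p))" "increasing_event S A"
    and T: "\<And>n. finite (T n)" "\<And>n. T n \<subseteq> S"
    and fs: "\<And>n. unit_increasing S (fs n)" "\<And>n. determined_by S (T n) (fs n)"
    and lim: "\<And>x. x \<in> S \<rightarrow>\<^sub>E UNIV \<Longrightarrow> (\<lambda>n. fs n x) \<longlonglongrightarrow> f x"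
  shows "measure (PiM S (\<lambda>_. bern p)) A * (\<integral>x. f x \<partial>PiM S (\<lambda>_. bern p))
          \<le> (\<integral>x. indicator A x * f x \<partial>PiM S (\<lambda>_. bern p))"
proof -
  let ?P = "PiM S (\<lambda>_. bern p)"
  interpret P: prob_space ?P by (rule prob_space_PiM_bern)
  have fm: "fs n \<in> borel_measurable ?P" for n by (rule determined_by_measurable[OF T(1,2) fs(2)])
  have f_meas: "f \<in> borel_measurable ?P"
    by (rule borel_measurable_LIMSEQ_real[OF _ fm]) (use lim in simp)
  have fb: "norm (fs n x) \<le> 1" if "x \<in> space ?P" for n x
    using unit_increasing_bounds[OF fs(1), of x n] that by simp
  have im: "(indicator A :: _ \<Rightarrow> real) \<in> borel_measurable ?P" using A(1) by simp
  have ineq: "(\<integral>x. fs n x \<partial>?P) * (\<integral>x. indicator A x \<partial>?P) \<le> (\<integral>x. fs n x * indicator A x \<partial>?P)" for n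
    by (rule harris_finite[OF T(1,2) p fs(1,2) unit_increasing_indicator[OF A(2)] im])
  have c1: "(\<lambda>n. \<integral>x. fs n x \<partial>?P) \<longlonglongrightarrow> (\<integral>x. f x \<partial>?P)"
    by (rule integral_dominated_convergence[where w="\<lambda>_. 1"]) (use f_meas fm lim fb in auto)
  have c2: "(\<lambda>n. \<integral>x. fs n x * indicator A x \<partial>?P) \<longlonglongrightarrow> (\<integral>x. f x * indicator A x \<partial>?P)"
  proof (rule integral_dominated_convergence[where w="\<lambda>_. 1"])
    show "AE x in ?P. (\<lambda>n. fs n x * indicator A x) \<longlonglongrightarrow> f x * indicator A x"
      using lim by (intro AE_I2) (auto intro!: tendsto_mult_right)
    show "\<And>n. AE x in ?P. norm (fs n x * indicator A x) \<le> 1"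
      using fb by (auto simp: indicator_def)
  qed (use f_meas fm im in auto)
  have "(\<integral>x. f x \<partial>?P) * (\<integral>x. indicator A x \<partial>?P) \<le> (\<integral>x. f x * indicator A x \<partial>?P)"
    by (rule LIMSEQ_le[OF tendsto_mult_right[OF c1] c2]) (use ineq in auto)
  moreover have "(\<integral>x. indicator A x \<partial>?P) = measure ?P A"
    using A(1) sets.sets_into_space[OF A(1)] by (simp add: Int_absorb2 del: space_PiM_bern)
  ultimately show ?thesis by (simp add: mult.commute)
qed

lemma adj_mono: "F \<subseteq> G \<Longrightarrow> adj F \<subseteq> adj G"
  unfolding adj_def by auto

lemma component_mono: "F \<subseteq> G \<Longrightarrow> component F v \<subseteq> component G v"
  unfolding component_def using rtrancl_mono[OF adj_mono] by blast

lemma component_self [simp]: "v \<in> component F v"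
  unfolding component_def by simp

lemma rtrancl_adj_sym: "(a, b) \<in> (adj F)\<^sup>* \<Longrightarrow> (b, a) \<in> (adj F)\<^sup>*"
proof -
  have "sym (adj F)" unfolding adj_def sym_def by auto
  then show "(a, b) \<in> (adj F)\<^sup>* \<Longrightarrow> (b, a) \<in> (adj F)\<^sup>*" by (meson sym_rtrancl symD)
qed

lemma component_eq: "y \<in> component F x \<Longrightarrow> component F y = component F x"
  unfolding component_def by (auto intro: rtrancl_trans dest: rtrancl_adj_sym)

lemma component_iff: "component F a = component F b \<longleftrightarrow> b \<in> component F a"
  by (metis component_eq component_self)

lemma component_subset_closed:
  assumes "v \<in> Z" and closed: "\<And>a b. a \<in> Z \<Longrightarrow> (a, b) \<in> adj F \<Longrightarrow> b \<in> Z"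
  shows "component F v \<subseteq> Z"
proof
  fix y assume "y \<in> component F v"
  then have "(v, y) \<in> (adj F)\<^sup>*" unfolding component_def by simp
  then show "y \<in> Z"
    by (induction rule: rtrancl_induct) (use assms in auto)
qed

lemma component_restrict:
  assumes GF: "G \<subseteq> F" and st: "\<And>a b. a \<in> component F x \<Longrightarrow> (a, b) \<in> adj F \<Longrightarrow> (a, b) \<in> adj G"
  shows "component F x = component G x"
proof
  show "component G x \<subseteq> component F x" by (rule component_mono[OF GF])
  show "component F x \<subseteq> component G x"
  proof
    fix y assume "y \<in> component F x"
    then have "(x, y) \<in> (adj F)\<^sup>*" unfolding component_def by simp
    then have "(x, y) \<in> (adj G)\<^sup>*"
    proof (induction rule: rtrancl_induct)
      case (step a b)
      then have "a \<in> component F x" unfolding component_def by simp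
      then have "(a, b) \<in> adj G" using st step.hyps(2) by blast
      with step.IH show ?case by (rule rtrancl_into_rtrancl)
    qed simp
    then show "y \<in> component G x" unfolding component_def by simp
  qed
qed

lemma rep_in: "C \<noteq> {} \<Longrightarrow> rep (C :: vertex set) \<in> C"
proof -
  assume "C \<noteq> {}"
  then have "\<exists>n. n \<in> to_nat ` C" by auto
  then have "(LEAST n. n \<in> to_nat ` C) \<in> to_nat ` C" by (rule LeastI_ex)
  then obtain d where "d \<in> C" "(LEAST n. n \<in> to_nat ` C) = to_nat d" by auto
  then show ?thesis unfolding rep_def by simp
qed

lemma rep_component: "rep (component F v) \<in> component F v"
  by (rule rep_in) (use component_self in blast)

lemma rep_component_inj:
  assumes "rep (component F a) = rep (component F b)"
  shows "component F a = component F b"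
proof -
  have "component F a = component F (rep (component F a))"
    by (rule component_eq[OF rep_component, symmetric])
  also have "\<dots> = component F (rep (component F b))" using assms by (rule arg_cong)
  also have "\<dots> = component F b" by (rule component_eq[OF rep_component])
  finally show ?thesis .
qed

lemma card_image_refine:
  assumes "finite X" "\<And>a b. a \<in> X \<Longrightarrow> b \<in> X \<Longrightarrow> f a = f b \<Longrightarrow> g a = g b"
  shows "card (g ` X) \<le> card (f ` X)"
proof -
  define h where "h c = g (SOME a. a \<in> X \<and> f a = c)" for c
  have h: "h (f a) = g a" if a: "a \<in> X" for a
  proof -
    have "\<exists>a'. a' \<in> X \<and> f a' = f a" using a by auto
    then have "(SOME a'. a' \<in> X \<and> f a' = f a) \<in> X \<and> f (SOME a'. a' \<in> X \<and> f a' = f a) = f a"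
      by (rule someI_ex)
    then show ?thesis unfolding h_def using assms(2) a by blast
  qed
  have "g ` X = h ` (f ` X)"
    unfolding image_image using h by (intro image_cong) auto
  then show ?thesis using assms(1) by (simp add: card_image_le)
qed

text \<open>More open edges can only merge components: fewer distinct components of a point set.\<close>
lemma card_components_mono:
  assumes "F \<subseteq> G"
  shows "card ((\<lambda>v. component G v) ` set vs) \<le> card ((\<lambda>v. component F v) ` set vs)"
proof (rule card_image_refine)
  fix a b assume "component F a = component F b"
  then have "b \<in> component F a" by (metis component_iff)
  then have "b \<in> component G a" using component_mono[OF assms] by blast
  then show "component G a = component G b" by (metis component_iff)
qed simp

section \<open>Approximation by boxes\<close>

definition box :: "nat \<Rightarrow> vertex set" where
  "box n = {-int n..int n} \<times> {-int n..int n}"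

definition Box :: "nat \<Rightarrow> edge set" where
  "Box n = {e. fst e \<in> box n \<and> snd e \<in> box n}"

lemma finite_Box: "finite (Box n)"
proof -
  have "Box n \<subseteq> box n \<times> box n" unfolding Box_def by auto
  then show ?thesis unfolding box_def by (meson finite_SigmaI finite_atLeastAtMost_int finite_subset)
qed

lemma box_mono: "n \<le> m \<Longrightarrow> box n \<subseteq> box m"
  unfolding box_def by auto

lemma Box_mono: "n \<le> m \<Longrightarrow> Box n \<subseteq> Box m"
  unfolding Box_def using box_mono by blast

lemma in_box: "v \<in> box (nat \<bar>fst v\<bar> + nat \<bar>snd v\<bar>)"
  unfolding box_def by (cases v) auto

lemma path_in_Box:
  assumes "(a, b) \<in> (adj F)\<^sup>*"
  shows "\<exists>n. (a, b) \<in> (adj (F \<inter> Box n))\<^sup>*"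
  using assms
proof (induction rule: rtrancl_induct)
  case (step c b)
  then obtain n where n: "(a, c) \<in> (adj (F \<inter> Box n))\<^sup>*" by auto
  define m where "m = max n (max (nat \<bar>fst c\<bar> + nat \<bar>snd c\<bar>) (nat \<bar>fst b\<bar> + nat \<bar>snd b\<bar>))"
  have cb: "c \<in> box m" "b \<in> box m"
    using in_box[of c] in_box[of b] box_mono unfolding m_def by (meson max.cobounded1 max.cobounded2 subsetD)+
  have "(a, c) \<in> (adj (F \<inter> Box m))\<^sup>*"
    using n rtrancl_mono[OF adj_mono[of "F \<inter> Box n" "F \<inter> Box m"]] Box_mono[of n m]
    unfolding m_def by auto
  moreover have "(c, b) \<in> adj (F \<inter> Box m)"
    using step(2) cb unfolding adj_def Box_def by auto
  ultimately show ?case by (meson rtrancl_into_rtrancl)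
qed auto

lemma eventually_component_Box:
  "eventually (\<lambda>n. b \<in> component (F \<inter> Box n) a \<longleftrightarrow> b \<in> component F a) sequentially"
proof (cases "b \<in> component F a")
  case True
  then obtain n0 where "(a, b) \<in> (adj (F \<inter> Box n0))\<^sup>*"
    using path_in_Box unfolding component_def by blast
  then have "b \<in> component (F \<inter> Box n) a" if "n \<ge> n0" for n
    using component_mono[of "F \<inter> Box n0" "F \<inter> Box n"] Box_mono[OF that] unfolding component_def by blast
  then show ?thesis using True by (auto simp: eventually_sequentially)
next
  case False
  then have "b \<notin> component (F \<inter> Box n) a" for n using component_mono[of "F \<inter> Box n" F] by blast
  then show ?thesis using False by simp
qed

lemma eventually_card_components_Box:
  "eventually (\<lambda>n. card ((\<lambda>v. component (F \<inter> Box n) v) ` set vs) = card ((\<lambda>v. component F v) ` set vs)) sequentially"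
proof -
  have "eventually (\<lambda>n. \<forall>z\<in>set vs \<times> set vs.
      snd z \<in> component (F \<inter> Box n) (fst z) \<longleftrightarrow> snd z \<in> component F (fst z)) sequentially"
    using eventually_component_Box by (intro eventually_ball_finite) auto
  then show ?thesis
  proof (rule eventually_mono)
    fix n assume H: "\<forall>z\<in>set vs \<times> set vs. snd z \<in> component (F \<inter> Box n) (fst z) \<longleftrightarrow> snd z \<in> component F (fst z)"
    have same: "component (F \<inter> Box n) a = component (F \<inter> Box n) b \<longleftrightarrow> component F a = component F b"
      if "a \<in> set vs" "b \<in> set vs" for a b
      using H that unfolding component_iff by auto
    have "card ((\<lambda>v. component (F \<inter> Box n) v) ` set vs) \<le> card ((\<lambda>v. component F v) ` set vs)"
      by (rule card_image_refine) (auto simp: same)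
    moreover have "card ((\<lambda>v. component F v) ` set vs) \<le> card ((\<lambda>v. component (F \<inter> Box n) v) ` set vs)"
      by (rule card_image_refine) (auto simp: same)
    ultimately show "card ((\<lambda>v. component (F \<inter> Box n) v) ` set vs) = card ((\<lambda>v. component F v) ` set vs)"
      by (rule antisym)
  qed
qed

section \<open>Barriers and the regions they separate\<close>

lemma barrier_subset_E2: "barrier B \<Longrightarrow> B \<subseteq> E2"
  unfolding barrier_def by auto

lemma extB_component:
  assumes "barrier B"
  shows "extB B \<in> components (E2 - B)" and "infinite (extB B)"
proof -
  have "\<exists>!C. C \<in> components (E2 - B) \<and> infinite C" using assms unfolding barrier_def by blast
  then have "extB B \<in> components (E2 - B) \<and> infinite (extB B)" unfolding extB_def by (rule theI')
  then show "extB B \<in> components (E2 - B)" and "infinite (extB B)" by auto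
qed

lemma extB_step:
  assumes "barrier B" "a \<in> extB B" "(a, b) \<in> adj (E2 - B)"
  shows "b \<in> extB B"
proof -
  obtain x0 where "extB B = component (E2 - B) x0"
    using extB_component(1)[OF assms(1)] unfolding components_def by auto
  then show ?thesis using assms(2,3) unfolding component_def by auto
qed

text \<open>The component of an interior vertex in the complement of the barrier is finite,
  hence disjoint from the (infinite) exterior.\<close>
lemma intB_component_disjoint_extB:
  assumes "barrier B" "u \<in> intB B"
  shows "component (E2 - B) u \<inter> extB B = {}"
proof (rule ccontr)
  assume "component (E2 - B) u \<inter> extB B \<noteq> {}"
  then obtain z where z: "z \<in> component (E2 - B) u" "z \<in> extB B" by auto
  obtain C where C: "C \<in> components (E2 - B)" "finite C" "u \<in> C"
    using assms(2) unfolding intB_def by auto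
  obtain x where x: "C = component (E2 - B) x" using C(1) unfolding components_def by auto
  obtain x0 where x0: "extB B = component (E2 - B) x0"
    using extB_component(1)[OF assms(1)] unfolding components_def by auto
  have "component (E2 - B) u = C" using component_eq[of u "E2 - B" x] C(3) x by simp
  moreover have "component (E2 - B) z = extB B" using component_eq[of z "E2 - B" x0] z(2) x0 by simp
  moreover have "component (E2 - B) z = component (E2 - B) u" using component_eq[OF z(1)] .
  ultimately show False using C(2) extB_component(2)[OF assms(1)] by simp
qed

definition Vreg :: "edge set list \<Rightarrow> vertex set" where
  "Vreg Bs = \<Inter> (extB ` set Bs)"

definition Vedges :: "edge set list \<Rightarrow> edge set" where
  "Vedges Bs = {e \<in> E2. fst e \<in> Vreg Bs \<and> snd e \<in> Vreg Bs \<and> e \<notin> \<Union> (set Bs)}"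

definition Wedges :: "edge set list \<Rightarrow> edge set" where
  "Wedges Bs = E2 - Vedges Bs"

lemma Wedges_Vedges_disjoint: "Wedges Bs \<inter> Vedges Bs = {}"
  unfolding Wedges_def by auto

lemma Wedges_Vedges_union: "Wedges Bs \<union> Vedges Bs = E2"
  unfolding Wedges_def Vedges_def by auto

lemma inner_vertex_not_Vreg:
  assumes bar: "\<forall>B\<in>set Bs. barrier B" and u: "u \<in> \<Union> (intB ` set Bs)"
  shows "u \<notin> Vreg Bs"
proof -
  obtain B where B: "B \<in> set Bs" "u \<in> intB B" using u by auto
  have "u \<notin> extB B"
    using intB_component_disjoint_extB[OF bar[rule_format, OF B(1)] B(2)] component_self by blast
  then show ?thesis using B(1) unfolding Vreg_def by auto
qed

lemma Vreg_open_step: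
  assumes bar: "\<forall>B\<in>set Bs. barrier B" and closed: "\<forall>B\<in>set Bs. \<forall>e\<in>B. \<not> y e"
    and a: "a \<in> Vreg Bs" and ab: "(a, b) \<in> adj {e \<in> E2. y e}"
  shows "b \<in> Vreg Bs \<and> (a, b) \<in> adj {e \<in> Vedges Bs. y e}"
proof -
  obtain e where e: "e \<in> E2" "y e" "e = (a, b) \<or> e = (b, a)" using ab unfolding adj_def by blast
  have nB: "e \<notin> \<Union> (set Bs)" using closed e(2) by auto
  have "b \<in> extB B" if B: "B \<in> set Bs" for B
  proof (rule extB_step)
    show "a \<in> extB B" using a B unfolding Vreg_def by auto
    show "(a, b) \<in> adj (E2 - B)" using e nB B unfolding adj_def by auto
  qed (use bar B in blast)
  then have bV: "b \<in> Vreg Bs" unfolding Vreg_def by auto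
  then have "e \<in> Vedges Bs" using e nB a unfolding Vedges_def by auto
  with bV e show ?thesis unfolding adj_def by auto
qed

lemma cluster_of_Vreg:
  assumes bar: "\<forall>B\<in>set Bs. barrier B" and closed: "\<forall>B\<in>set Bs. \<forall>e\<in>B. \<not> y e"
    and v: "v \<in> Vreg Bs"
  shows "component {e \<in> E2. y e} v = component {e \<in> Vedges Bs. y e} v"
proof (rule component_restrict)
  have "component {e \<in> E2. y e} v \<subseteq> Vreg Bs"
    by (rule component_subset_closed[OF v]) (use Vreg_open_step[OF bar closed] in blast)
  then show "\<And>a b. a \<in> component {e \<in> E2. y e} v \<Longrightarrow> (a, b) \<in> adj {e \<in> E2. y e} \<Longrightarrow>
      (a, b) \<in> adj {e \<in> Vedges Bs. y e}"
    using Vreg_open_step[OF bar closed] by blast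
qed (auto simp: Vedges_def)

lemma component_Vedges_subset:
  assumes v: "v \<in> Vreg Bs"
  shows "component {e \<in> Vedges Bs. P e} v \<subseteq> Vreg Bs"
  by (rule component_subset_closed[OF v]) (auto simp: adj_def Vedges_def)

text \<open>With closed barriers, the cluster of an interior vertex uses only \<open>Wedges\<close> and
  never meets \<open>Vreg\<close>: it stays in the finite component of the barrier complement.\<close>
lemma cluster_of_inner:
  assumes bar: "\<forall>B\<in>set Bs. barrier B" and closed: "\<forall>B\<in>set Bs. \<forall>e\<in>B. \<not> y e"
    and B: "B \<in> set Bs" and u: "u \<in> intB B"
  shows "component {e \<in> E2. y e} u = component {e \<in> Wedges Bs. y e} u"
    and "component {e \<in> Wedges Bs. y e} u \<inter> Vreg Bs = {}"
proof -
  let ?Z = "component (E2 - B) u"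
  have ZV: "?Z \<inter> Vreg Bs = {}"
    using intB_component_disjoint_extB[OF bar[rule_format, OF B] u] B unfolding Vreg_def by auto
  have step: "b \<in> ?Z \<and> (a, b) \<in> adj {e \<in> Wedges Bs. y e}"
    if a: "a \<in> ?Z" and ab: "(a, b) \<in> adj {e \<in> E2. y e}" for a b
  proof -
    obtain e where e: "e \<in> E2" "y e" "e = (a, b) \<or> e = (b, a)" using ab unfolding adj_def by blast
    have "e \<notin> B" using closed e(2) B by auto
    then have "(a, b) \<in> adj (E2 - B)" using e unfolding adj_def by auto
    then have bZ: "b \<in> ?Z" using a unfolding component_def by auto
    have "a \<notin> Vreg Bs" using ZV a by auto
    then have "e \<in> Wedges Bs" using e unfolding Wedges_def Vedges_def by auto
    with bZ e show ?thesis unfolding adj_def by auto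
  qed
  have sub: "component {e \<in> E2. y e} u \<subseteq> ?Z"
    by (rule component_subset_closed) (use step in auto)
  show eq: "component {e \<in> E2. y e} u = component {e \<in> Wedges Bs. y e} u"
    by (rule component_restrict) (use step sub in \<open>auto simp: Wedges_def\<close>)
  show "component {e \<in> Wedges Bs. y e} u \<inter> Vreg Bs = {}"
    using sub ZV unfolding eq by blast
qed

text \<open>Probability that a cluster receives colour \<open>\<kappa>\<close>.\<close>
definition rho :: "real \<Rightarrow> bool \<Rightarrow> real" where
  "rho r \<kappa> = (if \<kappa> then r else 1 - r)"

lemma rho_bounds: "0 \<le> r \<Longrightarrow> r \<le> 1 \<Longrightarrow> 0 \<le> rho r \<kappa> \<and> rho r \<kappa> \<le> 1"
  unfolding rho_def by auto

definition open_Vedges :: "edge set list \<Rightarrow> (edge \<Rightarrow> bool) \<Rightarrow> edge set" where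
  "open_Vedges Bs x = {e \<in> Vedges Bs. x e}"

text \<open>Conditional probability that all \<open>v \<in> vs\<close> receive colour \<open>\<kappa>\<close>, given the
  configuration \<open>x\<close> on \<open>Vedges\<close>: one factor \<open>\<rho>\<close> per distinct cluster; and its truncation
  to the box of radius \<open>n\<close>.\<close>
definition cluster_weight :: "edge set list \<Rightarrow> vertex list \<Rightarrow> real \<Rightarrow> bool \<Rightarrow> (edge \<Rightarrow> bool) \<Rightarrow> real" where
  "cluster_weight Bs vs r \<kappa> x = rho r \<kappa> ^ card ((\<lambda>v. component (open_Vedges Bs x) v) ` set vs)"

definition box_weight :: "edge set list \<Rightarrow> vertex list \<Rightarrow> real \<Rightarrow> bool \<Rightarrow> nat \<Rightarrow> (edge \<Rightarrow> bool) \<Rightarrow> real" where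
  "box_weight Bs vs r \<kappa> n x = rho r \<kappa> ^ card ((\<lambda>v. component (open_Vedges Bs x \<inter> Box n) v) ` set vs)"

lemma cluster_weight_bounds:
  "0 \<le> r \<Longrightarrow> r \<le> 1 \<Longrightarrow> 0 \<le> cluster_weight Bs vs r \<kappa> x \<and> cluster_weight Bs vs r \<kappa> x \<le> 1"
  unfolding cluster_weight_def using rho_bounds by (simp add: power_le_one)

text \<open>Opening edges merges clusters, so the truncated weights are increasing; they depend
  only on the finitely many edges in the box.\<close>
lemma box_weight_unit_increasing:
  assumes r: "0 \<le> r" "r \<le> 1"
  shows "unit_increasing (Vedges Bs) (box_weight Bs vs r \<kappa> n)"
  unfolding unit_increasing_def
proof (intro conjI ballI impI)
  fix x :: "edge \<Rightarrow> bool"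
  show "0 \<le> box_weight Bs vs r \<kappa> n x" "box_weight Bs vs r \<kappa> n x \<le> 1"
    unfolding box_weight_def using rho_bounds[OF r] by (simp_all add: power_le_one)
next
  fix x y :: "edge \<Rightarrow> bool" assume "\<forall>i\<in>Vedges Bs. x i \<longrightarrow> y i"
  then have "open_Vedges Bs x \<inter> Box n \<subseteq> open_Vedges Bs y \<inter> Box n"
    unfolding open_Vedges_def by auto
  then have "card ((\<lambda>v. component (open_Vedges Bs y \<inter> Box n) v) ` set vs)
      \<le> card ((\<lambda>v. component (open_Vedges Bs x \<inter> Box n) v) ` set vs)"
    by (rule card_components_mono)
  then show "box_weight Bs vs r \<kappa> n x \<le> box_weight Bs vs r \<kappa> n y"
    unfolding box_weight_def using rho_bounds[OF r] by (intro power_decreasing) auto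
qed

lemma box_weight_determined:
  "determined_by (Vedges Bs) (Vedges Bs \<inter> Box n) (box_weight Bs vs r \<kappa> n)"
  unfolding determined_by_def
proof (intro ballI impI)
  fix x y :: "edge \<Rightarrow> bool" assume "\<forall>i\<in>Vedges Bs \<inter> Box n. x i = y i"
  then have "open_Vedges Bs x \<inter> Box n = open_Vedges Bs y \<inter> Box n"
    unfolding open_Vedges_def by auto
  then show "box_weight Bs vs r \<kappa> n x = box_weight Bs vs r \<kappa> n y"
    unfolding box_weight_def by simp
qed

lemma box_weight_limit:
  "(\<lambda>n. box_weight Bs vs r \<kappa> n x) \<longlonglongrightarrow> cluster_weight Bs vs r \<kappa> x"
  using eventually_card_components_Box[of "open_Vedges Bs x" vs]
  unfolding box_weight_def cluster_weight_def
  by (rule tendsto_eventually[OF eventually_mono]) simp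

lemma cluster_weight_measurable:
  "cluster_weight Bs vs r \<kappa> \<in> borel_measurable (PiM (Vedges Bs) (\<lambda>_. bern p))"
proof (rule borel_measurable_LIMSEQ_real[OF box_weight_limit])
  show "box_weight Bs vs r \<kappa> n \<in> borel_measurable (PiM (Vedges Bs) (\<lambda>_. bern p))" for n
    using finite_Box by (intro determined_by_measurable[OF _ _ box_weight_determined]) auto
qed

text \<open>Harris' inequality for the cluster weight, stated for non-negative integrals, the
  form in which it enters the conditional probability.\<close>
lemma cluster_weight_harris:
  fixes vs :: "vertex list" and \<kappa> :: bool
  assumes p: "0 \<le> p" "p \<le> 1" and r: "0 \<le> r" "r \<le> 1"
    and A: "A \<in> sets (PiM (Vedges Bs) (\<lambda>_. bern p))" "increasing_event (Vedges Bs) A"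
  defines "K \<equiv> \<lambda>A'. \<integral>\<^sup>+x. indicator A' x * ennreal (cluster_weight Bs vs r \<kappa> x) \<partial>PiM (Vedges Bs) (\<lambda>_. bern p)"
  shows "ennreal (measure (PiM (Vedges Bs) (\<lambda>_. bern p)) A) * K (space (PiM (Vedges Bs) (\<lambda>_. bern p))) \<le> K A"
proof -
  let ?P = "PiM (Vedges Bs) (\<lambda>_. bern p)"
  let ?f = "cluster_weight Bs vs r \<kappa>"
  have fb: "0 \<le> ?f x" "?f x \<le> 1" for x using cluster_weight_bounds[OF r] by auto
  have fm: "?f \<in> borel_measurable ?P" by (rule cluster_weight_measurable)
  have harris: "measure ?P A * (\<integral>x. ?f x \<partial>?P) \<le> (\<integral>x. indicator A x * ?f x \<partial>?P)"
    by (rule harris_limit[where T = "\<lambda>n. Vedges Bs \<inter> Box n" and fs = "\<lambda>n. box_weight Bs vs r \<kappa> n", OF p A])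
      (use finite_Box box_weight_unit_increasing[OF r] box_weight_determined box_weight_limit in auto)
  have K_integral: "K A' = ennreal (\<integral>x. indicator A' x * ?f x \<partial>?P)" if "A' \<in> sets ?P" for A'
  proof -
    have "K A' = (\<integral>\<^sup>+x. ennreal (indicator A' x * ?f x) \<partial>?P)"
      unfolding K_def by (rule nn_integral_cong) (simp add: indicator_def)
    also have "\<dots> = ennreal (\<integral>x. indicator A' x * ?f x \<partial>?P)"
      using that fm fb
      by (intro nn_integral_eq_integral integrable_unit_bounded) (auto simp: indicator_def)
    finally show ?thesis .
  qed
  have "K (space ?P) = ennreal (\<integral>x. ?f x \<partial>?P)"
  proof -
    have "(\<integral>x. indicator (space ?P) x * ?f x \<partial>?P) = (\<integral>x. ?f x \<partial>?P)"
      by (rule Bochner_Integration.integral_cong) auto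
    then show ?thesis using K_integral[OF sets.top] by simp
  qed
  then have "ennreal (measure ?P A) * K (space ?P) = ennreal (measure ?P A * (\<integral>x. ?f x \<partial>?P))"
    using fb by (simp add: ennreal_mult integral_nonneg)
  also have "\<dots> \<le> K A"
    using K_integral[OF A(1)] harris by (simp add: indicator_def ennreal_leI)
  finally show ?thesis .
qed

section \<open>Integrating out the cluster colours\<close>

definition cond_event :: "edge set list \<Rightarrow> (edge \<times> bool) list \<Rightarrow> (vertex \<times> bool) list \<Rightarrow> vertex list \<Rightarrow>
    bool \<Rightarrow> real \<Rightarrow> real \<Rightarrow> ((edge \<Rightarrow> bool) \<times> (vertex \<Rightarrow> bool)) set" where
  "cond_event Bs es us vs \<kappa> p r = {\<omega> \<in> space (DaC p r).
     (\<forall>B\<in>set Bs. \<forall>e\<in>B. \<not> Ystate \<omega> e) \<and> (\<forall>(e, s)\<in>set es. Ystate \<omega> e = s) \<and>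
     (\<forall>(u, c)\<in>set us. Xcol \<omega> u = c) \<and> (\<forall>v\<in>set vs. Xcol \<omega> v = \<kappa>)}"

definition inner_ok :: "edge set list \<Rightarrow> (edge \<times> bool) list \<Rightarrow> (edge \<Rightarrow> bool) \<Rightarrow> bool" where
  "inner_ok Bs es w \<longleftrightarrow> (\<forall>B\<in>set Bs. \<forall>e\<in>B. \<not> w e) \<and> (\<forall>(e, s)\<in>set es. w e = s)"

text \<open>Clusters of the interior vertices \<open>us\<close>, determined by the \<open>Wedges\<close>-configuration \<open>w\<close>;
  their representatives; the colours compatible with the prescriptions at a representative;
  and the resulting probability of the colour prescriptions on \<open>us\<close>.\<close>
definition inner_cluster :: "edge set list \<Rightarrow> (edge \<Rightarrow> bool) \<Rightarrow> vertex \<Rightarrow> vertex set" where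
  "inner_cluster Bs w u = component {e \<in> Wedges Bs. w e} u"

definition inner_reps :: "edge set list \<Rightarrow> (vertex \<times> bool) list \<Rightarrow> (edge \<Rightarrow> bool) \<Rightarrow> vertex set" where
  "inner_reps Bs us w = (\<lambda>u. rep (inner_cluster Bs w u)) ` fst ` set us"

definition allowed_colours :: "edge set list \<Rightarrow> (vertex \<times> bool) list \<Rightarrow> (edge \<Rightarrow> bool) \<Rightarrow> vertex \<Rightarrow> bool set" where
  "allowed_colours Bs us w z = {t. \<forall>(u, c)\<in>set us. rep (inner_cluster Bs w u) = z \<longrightarrow> c = t}"

definition inner_weight :: "edge set list \<Rightarrow> (edge \<times> bool) list \<Rightarrow> (vertex \<times> bool) list \<Rightarrow> real \<Rightarrow>
    (edge \<Rightarrow> bool) \<Rightarrow> ennreal" where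
  "inner_weight Bs es us r w = (if inner_ok Bs es w
     then \<Prod>z\<in>inner_reps Bs us w. emeasure (bern r) (allowed_colours Bs us w z) else 0)"

definition outer_reps :: "edge set list \<Rightarrow> vertex list \<Rightarrow> (edge \<Rightarrow> bool) \<Rightarrow> vertex set" where
  "outer_reps Bs vs x = rep ` (\<lambda>v. component (open_Vedges Bs x) v) ` set vs"

lemma prescribed_colours_iff:
  "(\<forall>(u, c)\<in>set us. col (rep (inner_cluster Bs w u)) = c) \<longleftrightarrow>
   (\<forall>z\<in>inner_reps Bs us w. col z \<in> allowed_colours Bs us w z)"
  unfolding inner_reps_def allowed_colours_def by force

lemma prescriptions_cong:
  "(\<And>u c. (u, c) \<in> A \<Longrightarrow> F u = G u) \<Longrightarrow> (\<forall>(u, c)\<in>A. F u = c) \<longleftrightarrow> (\<forall>(u, c)\<in>A. G u = c)"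
  by auto

lemma colour_event_measure:
  fixes R1 R2 :: "vertex set" and X :: "vertex \<Rightarrow> bool set"
  assumes R: "finite R1" "finite R2" "R1 \<inter> R2 = {}" and r: "0 \<le> r" "r \<le> 1"
  shows "emeasure (PiM UNIV (\<lambda>_. bern r))
      {c \<in> space (PiM UNIV (\<lambda>_. bern r)). (\<forall>z\<in>R1. c z \<in> X z) \<and> (\<forall>z\<in>R2. c z = \<kappa>)}
     = (\<Prod>z\<in>R1. emeasure (bern r) (X z)) * ennreal (rho r \<kappa>) ^ card R2"
proof -
  interpret B: prob_space "bern r" by simp
  interpret product_prob_space "\<lambda>_::vertex. bern r" UNIV by unfold_locales
  define Y where "Y z = (if z \<in> R1 then X z else {\<kappa>})" for z
  have "{c \<in> space (PiM UNIV (\<lambda>_. bern r)). (\<forall>z\<in>R1. c z \<in> X z) \<and> (\<forall>z\<in>R2. c z = \<kappa>)}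
      = {c \<in> space (PiM UNIV (\<lambda>_. bern r)). \<forall>z\<in>R1 \<union> R2. c z \<in> Y z}"
    using R(3) unfolding Y_def by auto
  also have "emeasure (PiM UNIV (\<lambda>_. bern r)) \<dots> = (\<Prod>z\<in>R1 \<union> R2. emeasure (bern r) (Y z))"
    using emeasure_PiM_Collect[of "R1 \<union> R2" Y] R by simp
  also have "\<dots> = (\<Prod>z\<in>R1. emeasure (bern r) (Y z)) * (\<Prod>z\<in>R2. emeasure (bern r) (Y z))"
    using R by (intro prod.union_disjoint) auto
  also have "(\<Prod>z\<in>R1. emeasure (bern r) (Y z)) = (\<Prod>z\<in>R1. emeasure (bern r) (X z))"
    unfolding Y_def by simp
  also have "(\<Prod>z\<in>R2. emeasure (bern r) (Y z)) = (\<Prod>z\<in>R2. ennreal (rho r \<kappa>))"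
    using R(3) r unfolding Y_def bern_def rho_def by (intro prod.cong) (auto simp: emeasure_pmf_single)
  finally show ?thesis by simp
qed

lemma cond_event_at_merge:
  assumes bar: "\<forall>B\<in>set Bs. barrier B"
    and es: "\<forall>(e, s)\<in>set es. e \<in> E2 \<and> fst e \<in> \<Union> (intB ` set Bs)"
    and w: "w \<in> Wedges Bs \<rightarrow>\<^sub>E UNIV" and x: "x \<in> Vedges Bs \<rightarrow>\<^sub>E UNIV"
  defines "y \<equiv> merge (Wedges Bs) (Vedges Bs) (w, x)"
  shows "(y, c) \<in> cond_event Bs es us vs \<kappa> p r \<longleftrightarrow>
      c \<in> space (PiM UNIV (\<lambda>_::vertex. bern r)) \<and> inner_ok Bs es w \<and>
      (\<forall>(u, cu)\<in>set us. Xcol (y, c) u = cu) \<and> (\<forall>v\<in>set vs. Xcol (y, c) v = \<kappa>)"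
    and "restrict (Ystate (y, c)) (Vedges Bs) = x"
    and "(y, c) \<in> space (DaC p r) \<longleftrightarrow> c \<in> space (PiM UNIV (\<lambda>_::vertex. bern r))"
proof -
  have yW: "y e = w e" if "e \<in> Wedges Bs" for e
    using that Wedges_Vedges_disjoint unfolding y_def by simp
  have Ystate: "Ystate (y, c) = y" for c by (simp add: Ystate_def fun_eq_iff)
  show "restrict (Ystate (y, c)) (Vedges Bs) = x"
    using x Wedges_Vedges_disjoint[of Bs] unfolding y_def Ystate_def
    by (simp add: restrict_merge PiE_restrict)
  show space_iff: "(y, c) \<in> space (DaC p r) \<longleftrightarrow> c \<in> space (PiM UNIV (\<lambda>_::vertex. bern r))" for c
  proof -
    have "y \<in> E2 \<rightarrow>\<^sub>E UNIV"
      using w x extensional_merge_sub[of "Wedges Bs" "Vedges Bs" E2 w x] Wedges_Vedges_union[of Bs]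
      unfolding y_def by (auto simp: PiE_iff)
    then show ?thesis unfolding DaC_def by (simp add: space_pair_measure)
  qed
  have barrier_W: "e \<in> Wedges Bs" if "B \<in> set Bs" "e \<in> B" for B e
    using that barrier_subset_E2 bar unfolding Wedges_def Vedges_def by blast
  have es_W: "e \<in> Wedges Bs" if "(e, s) \<in> set es" for e s
  proof -
    have "e \<in> E2" "fst e \<in> \<Union> (intB ` set Bs)" using es that by auto
    then show ?thesis using inner_vertex_not_Vreg[OF bar] unfolding Wedges_def Vedges_def by blast
  qed
  have "((\<forall>B\<in>set Bs. \<forall>e\<in>B. \<not> y e) \<and> (\<forall>(e, s)\<in>set es. y e = s)) \<longleftrightarrow> inner_ok Bs es w"
    unfolding inner_ok_def using yW barrier_W es_W by auto
  then show "(y, c) \<in> cond_event Bs es us vs \<kappa> p r \<longleftrightarrow>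
      c \<in> space (PiM UNIV (\<lambda>_::vertex. bern r)) \<and> inner_ok Bs es w \<and>
      (\<forall>(u, cu)\<in>set us. Xcol (y, c) u = cu) \<and> (\<forall>v\<in>set vs. Xcol (y, c) v = \<kappa>)"
    by (auto simp: cond_event_def Ystate space_iff)
qed

lemma colours_at_merge:
  fixes w x :: "edge \<Rightarrow> bool"
  assumes bar: "\<forall>B\<in>set Bs. barrier B" and closed: "\<forall>B\<in>set Bs. \<forall>e\<in>B. \<not> w e"
  defines "y \<equiv> merge (Wedges Bs) (Vedges Bs) (w, x)"
  shows "u \<in> \<Union> (intB ` set Bs) \<Longrightarrow> Xcol (y, c) u = c (rep (inner_cluster Bs w u))"
    and "v \<in> Vreg Bs \<Longrightarrow> Xcol (y, c) v = c (rep (component (open_Vedges Bs x) v))"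
proof -
  have yW: "y e = w e" if "e \<in> Wedges Bs" for e
    using that Wedges_Vedges_disjoint unfolding y_def by simp
  have yV: "y e = x e" if "e \<in> Vedges Bs" for e
    using that Wedges_Vedges_disjoint unfolding y_def by simp
  have "B \<subseteq> Wedges Bs" if "B \<in> set Bs" for B
    using that barrier_subset_E2 bar unfolding Wedges_def Vedges_def by blast
  then have y_closed: "\<forall>B\<in>set Bs. \<forall>e\<in>B. \<not> y e" using closed yW by blast
  have Xcol: "Xcol (y, c) z = c (rep (component {e \<in> E2. y e} z))" for z
    unfolding Xcol_def cluster_def by simp
  show "Xcol (y, c) u = c (rep (inner_cluster Bs w u))" if u: "u \<in> \<Union> (intB ` set Bs)"
  proof -
    obtain B where B: "B \<in> set Bs" "u \<in> intB B" using u by auto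
    have "{e \<in> Wedges Bs. y e} = {e \<in> Wedges Bs. w e}" using yW by auto
    then show ?thesis using cluster_of_inner(1)[OF bar y_closed B] unfolding Xcol inner_cluster_def by simp
  qed
  show "Xcol (y, c) v = c (rep (component (open_Vedges Bs x) v))" if v: "v \<in> Vreg Bs"
  proof -
    have "{e \<in> Vedges Bs. y e} = open_Vedges Bs x" using yV unfolding open_Vedges_def by auto
    then show ?thesis using cluster_of_Vreg[OF bar y_closed v] unfolding Xcol by simp
  qed
qed

lemma section_cond_event:
  assumes bar: "\<forall>B\<in>set Bs. barrier B"
    and es: "\<forall>(e, s)\<in>set es. e \<in> E2 \<and> fst e \<in> \<Union> (intB ` set Bs)"
    and us: "\<forall>(u, c)\<in>set us. u \<in> \<Union> (intB ` set Bs)" and vs: "\<forall>v\<in>set vs. v \<in> Vreg Bs"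
    and w: "w \<in> Wedges Bs \<rightarrow>\<^sub>E UNIV" and x: "x \<in> Vedges Bs \<rightarrow>\<^sub>E UNIV"
  defines "y \<equiv> merge (Wedges Bs) (Vedges Bs) (w, x)"
    and "Z \<equiv> \<lambda>\<omega>. restrict (Ystate \<omega>) (Vedges Bs)"
  shows "Pair y -` (cond_event Bs es us vs \<kappa> p r \<inter> (Z -` A \<inter> space (DaC p r))) =
    (if inner_ok Bs es w \<and> x \<in> A
     then {c \<in> space (PiM UNIV (\<lambda>_. bern r)). (\<forall>z\<in>inner_reps Bs us w. c z \<in> allowed_colours Bs us w z) \<and>
                                             (\<forall>z\<in>outer_reps Bs vs x. c z = \<kappa>)}
     else {})"
proof (cases "inner_ok Bs es w \<and> x \<in> A")
  case True
  then have closed: "\<forall>B\<in>set Bs. \<forall>e\<in>B. \<not> w e" unfolding inner_ok_def by blast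
  note colour = colours_at_merge[where x = x, OF bar closed, folded y_def]
  have "(\<forall>(u, cu)\<in>set us. Xcol (y, c) u = cu) \<longleftrightarrow> (\<forall>(u, cu)\<in>set us. c (rep (inner_cluster Bs w u)) = cu)" for c
  proof (rule prescriptions_cong)
    fix u cu assume "(u, cu) \<in> set us"
    from bspec[OF us this] have "u \<in> \<Union> (intB ` set Bs)" by simp
    then show "Xcol (y, c) u = c (rep (inner_cluster Bs w u))" by (rule colour(1))
  qed
  then have us_iff: "(\<forall>(u, cu)\<in>set us. Xcol (y, c) u = cu) \<longleftrightarrow>
      (\<forall>z\<in>inner_reps Bs us w. c z \<in> allowed_colours Bs us w z)" for c
    by (simp add: prescribed_colours_iff)
  have vs_iff: "(\<forall>v\<in>set vs. Xcol (y, c) v = \<kappa>) \<longleftrightarrow> (\<forall>z\<in>outer_reps Bs vs x. c z = \<kappa>)" for c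
    using colour(2) vs unfolding outer_reps_def by auto
  show ?thesis
    using True cond_event_at_merge[OF bar es w x, folded y_def] us_iff vs_iff unfolding Z_def by auto
next
  case False
  then show ?thesis
    using cond_event_at_merge[OF bar es w x, folded y_def] unfolding Z_def by auto
qed

lemma colour_probability:
  assumes bar: "\<forall>B\<in>set Bs. barrier B"
    and es: "\<forall>(e, s)\<in>set es. e \<in> E2 \<and> fst e \<in> \<Union> (intB ` set Bs)"
    and us: "\<forall>(u, c)\<in>set us. u \<in> \<Union> (intB ` set Bs)" and vs: "\<forall>v\<in>set vs. v \<in> Vreg Bs"
    and r: "0 \<le> r" "r \<le> 1"
    and w: "w \<in> Wedges Bs \<rightarrow>\<^sub>E UNIV" and x: "x \<in> Vedges Bs \<rightarrow>\<^sub>E UNIV"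
  shows "emeasure (PiM UNIV (\<lambda>_. bern r)) (Pair (merge (Wedges Bs) (Vedges Bs) (w, x)) -`
      (cond_event Bs es us vs \<kappa> p r \<inter> ((\<lambda>\<omega>. restrict (Ystate \<omega>) (Vedges Bs)) -` A \<inter> space (DaC p r))))
    = inner_weight Bs es us r w * (indicator A x * ennreal (cluster_weight Bs vs r \<kappa> x))"
proof (cases "inner_ok Bs es w \<and> x \<in> A")
  case True
  have disjoint: "inner_reps Bs us w \<inter> outer_reps Bs vs x = {}"
  proof -
    have "inner_cluster Bs w u \<inter> Vreg Bs = {}" if "u \<in> \<Union> (intB ` set Bs)" for u
      using that True cluster_of_inner(2)[OF bar, of w] unfolding inner_ok_def inner_cluster_def by blast
    then have "inner_reps Bs us w \<inter> Vreg Bs = {}"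
      using us rep_component[of "{e \<in> Wedges Bs. w e}"] unfolding inner_reps_def inner_cluster_def by fastforce
    moreover have "outer_reps Bs vs x \<subseteq> Vreg Bs"
      using component_Vedges_subset vs rep_component unfolding outer_reps_def open_Vedges_def by blast
    ultimately show ?thesis by blast
  qed
  have "card (outer_reps Bs vs x) = card ((\<lambda>v. component (open_Vedges Bs x) v) ` set vs)"
    unfolding outer_reps_def by (rule card_image) (auto intro!: inj_onI rep_component_inj)
  then have "ennreal (rho r \<kappa>) ^ card (outer_reps Bs vs x) = ennreal (cluster_weight Bs vs r \<kappa> x)"
    unfolding cluster_weight_def using rho_bounds[OF r] by (simp add: ennreal_power)
  then show ?thesis
    using section_cond_event[OF bar es us vs w x] True disjoint r
      colour_event_measure[of "inner_reps Bs us w" "outer_reps Bs vs x"]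
    by (simp add: inner_weight_def inner_reps_def outer_reps_def)
next
  case False
  then show ?thesis
    using section_cond_event[OF bar es us vs w x] by (auto simp: inner_weight_def)
qed

lemma conditional_dominance:
  fixes Z :: "'a \<Rightarrow> 'b" and g :: "'w \<Rightarrow> ennreal" and K :: "'b set \<Rightarrow> ennreal"
  assumes D: "prob_space D" and Z: "Z \<in> measurable D N"
    and I: "I \<in> sets D" "measure D I > 0" and A: "A \<in> sets N" and a: "0 \<le> a"
    and joint: "\<And>A'. A' \<in> sets N \<Longrightarrow> emeasure D (I \<inter> (Z -` A' \<inter> space D)) = (\<integral>\<^sup>+w. g w * K A' \<partial>W)"
    and gm: "(\<lambda>w. g w * K (space N)) \<in> borel_measurable W"
    and corr: "ennreal a * K (space N) \<le> K A"
  shows "a \<le> measure (distr (uniform_measure D I) N Z) A"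
proof -
  interpret prob_space D by (rule D)
  have ZA: "Z -` A \<inter> space D \<in> sets D" using measurable_sets[OF Z A] .
  have "I \<inter> (Z -` space N \<inter> space D) = I"
    using sets.sets_into_space[OF I(1)] measurable_space[OF Z] by blast
  then have "ennreal a * emeasure D I = ennreal a * (\<integral>\<^sup>+w. g w * K (space N) \<partial>W)"
    using joint[of "space N"] by simp
  also have "\<dots> = (\<integral>\<^sup>+w. ennreal a * (g w * K (space N)) \<partial>W)"
    using gm by (rule nn_integral_cmult[symmetric])
  also have "\<dots> \<le> (\<integral>\<^sup>+w. g w * K A \<partial>W)"
    using corr by (intro nn_integral_mono) (metis mult.left_commute mult_left_mono zero_le)
  also have "\<dots> = emeasure D (I \<inter> (Z -` A \<inter> space D))"
    using joint[OF A] by simp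
  finally have "a * measure D I \<le> measure D (I \<inter> (Z -` A \<inter> space D))"
    using a by (simp add: emeasure_eq_measure ennreal_mult[symmetric])
  moreover have "measure (distr (uniform_measure D I) N Z) A
      = measure D (I \<inter> (Z -` A \<inter> space D)) / measure D I"
  proof -
    have "Z \<in> measurable (uniform_measure D I) N" using Z by (simp cong: measurable_cong_sets)
    from measure_distr[OF this A]
    have "measure (distr (uniform_measure D I) N Z) A = measure (uniform_measure D I) (Z -` A \<inter> space D)"
      by simp
    then show ?thesis using I(2) ZA by (simp add: emeasure_eq_measure)
  qed
  ultimately show ?thesis using I(2) by (simp add: pos_le_divide_eq)
qed

lemma prob_space_DaC: "prob_space (DaC p r)"
  unfolding DaC_def
proof (rule prob_space_pair)
  show "prob_space (PiM E2 (\<lambda>_. bern p))" "prob_space (PiM UNIV (\<lambda>_::vertex. bern r))"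
    by (rule prob_space_PiM_bern)+
qed

lemma Vedges_config_measurable:
  "(\<lambda>\<omega>. restrict (Ystate \<omega>) (Vedges Bs)) \<in> measurable (DaC p r) (PiM (Vedges Bs) (\<lambda>_. bern p))"
proof -
  have "Vedges Bs \<subseteq> E2" unfolding Vedges_def by auto
  then have "(\<lambda>\<omega>. restrict (fst \<omega>) (Vedges Bs)) \<in> measurable (DaC p r) (PiM (Vedges Bs) (\<lambda>_. bern p))"
    unfolding DaC_def by (rule measurable_compose[OF measurable_fst measurable_restrict_subset])
  then show ?thesis by (simp add: Ystate_def[abs_def])
qed

text \<open>Disintegration of the divide-and-colour measure along a splitting \<open>E2 = W \<union> V\<close> of the
  edges: the edge configuration is the merge of independent configurations on \<open>W\<close> and \<open>V\<close>,
  and the colours are integrated out first (Tonelli).\<close>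
lemma DaC_disintegration:
  assumes Q: "Q \<in> sets (DaC p r)" and WV: "W \<inter> V = {}" "W \<union> V = E2"
  defines "h \<equiv> \<lambda>w x. emeasure (PiM UNIV (\<lambda>_::vertex. bern r)) (Pair (merge W V (w, x)) -` Q)"
  shows "(\<lambda>w. \<integral>\<^sup>+x. h w x \<partial>PiM V (\<lambda>_. bern p)) \<in> borel_measurable (PiM W (\<lambda>_. bern p))"
    and "emeasure (DaC p r) Q = (\<integral>\<^sup>+w. \<integral>\<^sup>+x. h w x \<partial>PiM V (\<lambda>_. bern p) \<partial>PiM W (\<lambda>_. bern p))"
proof -
  let ?Me = "PiM E2 (\<lambda>_::edge. bern p)" and ?Mc = "PiM UNIV (\<lambda>_::vertex. bern r)"
  let ?PW = "PiM W (\<lambda>_. bern p)" and ?PV = "PiM V (\<lambda>_. bern p)"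
  let ?m = "merge W V"
  let ?h = "\<lambda>y. emeasure ?Mc (Pair y -` Q)"
  interpret Mc: prob_space ?Mc by (rule prob_space_PiM_bern)
  interpret PV: prob_space ?PV by (rule prob_space_PiM_bern)
  have Q': "Q \<in> sets (?Me \<Otimes>\<^sub>M ?Mc)" using Q unfolding DaC_def .
  have m: "?m \<in> measurable (?PW \<Otimes>\<^sub>M ?PV) ?Me"
    using measurable_merge[where I=W and J=V and M="\<lambda>_. bern p"] unfolding WV(2) .
  have hm: "?h \<in> borel_measurable ?Me" by (rule Mc.measurable_emeasure_Pair[OF Q'])
  then have hmm: "(\<lambda>z. ?h (?m z)) \<in> borel_measurable (?PW \<Otimes>\<^sub>M ?PV)"
    using m by measurable
  show "(\<lambda>w. \<integral>\<^sup>+x. h w x \<partial>?PV) \<in> borel_measurable ?PW"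
    unfolding h_def by (rule PV.borel_measurable_nn_integral_fst[OF hmm])
  have "emeasure (DaC p r) Q = (\<integral>\<^sup>+y. ?h y \<partial>?Me)"
    unfolding DaC_def by (rule Mc.emeasure_pair_measure_alt[OF Q'])
  also have "\<dots> = (\<integral>\<^sup>+y. ?h y \<partial>distr (?PW \<Otimes>\<^sub>M ?PV) ?Me ?m)"
    using distr_merge_PiM[of W V "\<lambda>_. bern p"] WV by simp
  also have "\<dots> = (\<integral>\<^sup>+z. ?h (?m z) \<partial>(?PW \<Otimes>\<^sub>M ?PV))"
    by (rule nn_integral_distr[OF m]) (use hm in simp)
  also have "\<dots> = (\<integral>\<^sup>+w. \<integral>\<^sup>+x. h w x \<partial>?PV \<partial>?PW)"
    unfolding h_def by (rule PV.nn_integral_fst[symmetric, OF hmm])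
  finally show "emeasure (DaC p r) Q = (\<integral>\<^sup>+w. \<integral>\<^sup>+x. h w x \<partial>?PV \<partial>?PW)" .
qed

lemma cond_event_factorisation:
  fixes vs :: "vertex list" and \<kappa> :: bool
  assumes bar: "\<forall>B\<in>set Bs. barrier B"
    and es: "\<forall>(e, s)\<in>set es. e \<in> E2 \<and> fst e \<in> \<Union> (intB ` set Bs)"
    and us: "\<forall>(u, c)\<in>set us. u \<in> \<Union> (intB ` set Bs)" and vs: "\<forall>v\<in>set vs. v \<in> Vreg Bs"
    and r: "0 \<le> r" "r \<le> 1"
    and I: "cond_event Bs es us vs \<kappa> p r \<in> sets (DaC p r)"
    and A: "A \<in> sets (PiM (Vedges Bs) (\<lambda>_. bern p))"
  defines "Z \<equiv> \<lambda>\<omega>. restrict (Ystate \<omega>) (Vedges Bs)"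
    and "K \<equiv> \<lambda>A'. \<integral>\<^sup>+x. indicator A' x * ennreal (cluster_weight Bs vs r \<kappa> x) \<partial>PiM (Vedges Bs) (\<lambda>_. bern p)"
  shows "(\<lambda>w. inner_weight Bs es us r w * K A) \<in> borel_measurable (PiM (Wedges Bs) (\<lambda>_. bern p))"
    and "emeasure (DaC p r) (cond_event Bs es us vs \<kappa> p r \<inter> (Z -` A \<inter> space (DaC p r)))
       = (\<integral>\<^sup>+w. inner_weight Bs es us r w * K A \<partial>PiM (Wedges Bs) (\<lambda>_. bern p))"
proof -
  let ?PW = "PiM (Wedges Bs) (\<lambda>_. bern p)" and ?PV = "PiM (Vedges Bs) (\<lambda>_. bern p)"
  let ?Q = "cond_event Bs es us vs \<kappa> p r \<inter> (Z -` A \<inter> space (DaC p r))"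
  have Q: "?Q \<in> sets (DaC p r)"
    using I measurable_sets[OF Vedges_config_measurable A] unfolding Z_def by blast
  note disintegration = DaC_disintegration[OF Q Wedges_Vedges_disjoint Wedges_Vedges_union]
  have inner: "(\<integral>\<^sup>+x. emeasure (PiM UNIV (\<lambda>_. bern r)) (Pair (merge (Wedges Bs) (Vedges Bs) (w, x)) -` ?Q) \<partial>?PV)
      = inner_weight Bs es us r w * K A" if "w \<in> space ?PW" for w
  proof -
    have "(\<integral>\<^sup>+x. emeasure (PiM UNIV (\<lambda>_. bern r)) (Pair (merge (Wedges Bs) (Vedges Bs) (w, x)) -` ?Q) \<partial>?PV)
        = (\<integral>\<^sup>+x. inner_weight Bs es us r w * (indicator A x * ennreal (cluster_weight Bs vs r \<kappa> x)) \<partial>?PV)"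
      using that colour_probability[OF bar es us vs r] unfolding Z_def by (intro nn_integral_cong) simp
    also have "\<dots> = inner_weight Bs es us r w * K A"
      unfolding K_def using borel_measurable_indicator[OF A] cluster_weight_measurable
      by (intro nn_integral_cmult borel_measurable_times_ennreal measurable_compose[OF _ measurable_ennreal])
    finally show ?thesis .
  qed
  show "(\<lambda>w. inner_weight Bs es us r w * K A) \<in> borel_measurable ?PW"
    using disintegration(1) by (rule measurable_cong[THEN iffD1, rotated]) (erule inner)
  have "emeasure (DaC p r) ?Q = (\<integral>\<^sup>+w. \<integral>\<^sup>+x. emeasure (PiM UNIV (\<lambda>_. bern r))
      (Pair (merge (Wedges Bs) (Vedges Bs) (w, x)) -` ?Q) \<partial>?PV \<partial>?PW)"
    by (rule disintegration(2))
  also have "\<dots> = (\<integral>\<^sup>+w. inner_weight Bs es us r w * K A \<partial>?PW)"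
    by (rule nn_integral_cong) (erule inner)
  finally show "emeasure (DaC p r) ?Q = (\<integral>\<^sup>+w. inner_weight Bs es us r w * K A \<partial>?PW)" .
qed

theorem mainTheorem8:
  fixes p r :: real and Bs :: "edge set list"
    and es :: "(edge \<times> bool) list" and us :: "(vertex \<times> bool) list"
    and vs :: "vertex list" and \<kappa> :: bool
  defines "U \<equiv> \<Union> (intB ` set Bs)"
    and "V \<equiv> \<Inter> (extB ` set Bs)"
    and "I \<equiv> {\<omega> \<in> space (DaC p r).
              (\<forall>B\<in>set Bs. \<forall>e\<in>B. \<not> Ystate \<omega> e) \<and>
              (\<forall>(e, s)\<in>set es. Ystate \<omega> e = s) \<and>
              (\<forall>(u, c)\<in>set us. Xcol \<omega> u = c) \<and>
              (\<forall>v\<in>set vs. Xcol \<omega> v = \<kappa>)}"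
    and "SV \<equiv> {e \<in> E2. fst e \<in> \<Inter> (extB ` set Bs) \<and> snd e \<in> \<Inter> (extB ` set Bs) \<and> e \<notin> \<Union> (set Bs)}"
  assumes "0 \<le> p" "p \<le> 1" "0 \<le> r" "r \<le> 1"
    and "\<forall>B\<in>set Bs. barrier B"
    and "\<forall>(e, s)\<in>set es. e \<in> E2 \<and> fst e \<in> U \<and> snd e \<in> U \<and> e \<notin> \<Union> (set Bs)"
    and "\<forall>(u, c)\<in>set us. u \<in> U"
    and "\<forall>v\<in>set vs. v \<in> V"
    and "measure (DaC p r) I > 0"
  shows "stoch_dom SV
           (distr (uniform_measure (DaC p r) I) (nu p SV) (\<lambda>\<omega>. restrict (Ystate \<omega>) SV))
           (nu p SV)"
  unfolding stoch_dom_def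
proof (intro ballI impI)
  have SV: "SV = Vedges Bs" and I: "I = cond_event Bs es us vs \<kappa> p r"
    unfolding SV_def Vedges_def Vreg_def I_def cond_event_def by simp_all
  have es: "\<forall>(e, s)\<in>set es. e \<in> E2 \<and> fst e \<in> \<Union> (intB ` set Bs)"
    using assms(10) unfolding U_def by auto
  have us: "\<forall>(u, c)\<in>set us. u \<in> \<Union> (intB ` set Bs)" and vs: "\<forall>v\<in>set vs. v \<in> Vreg Bs"
    using assms(11,12) unfolding U_def V_def Vreg_def .
  have I_sets: "I \<in> sets (DaC p r)" using assms(13) measure_notin_sets by force
  fix A assume "A \<in> sets (PiM SV (\<lambda>_. count_space UNIV))" and incr: "increasing_event SV A"
  moreover have "sets (PiM SV (\<lambda>_. count_space UNIV)) = sets (PiM (Vedges Bs) (\<lambda>_. bern p))"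
    unfolding SV by (rule sets_PiM_cong) auto
  ultimately have A: "A \<in> sets (PiM (Vedges Bs) (\<lambda>_. bern p))" by simp
  let ?K = "\<lambda>A'. \<integral>\<^sup>+x. indicator A' x * ennreal (cluster_weight Bs vs r \<kappa> x) \<partial>PiM (Vedges Bs) (\<lambda>_. bern p)"
  note factorisation = cond_event_factorisation[OF assms(9) es us vs assms(7,8) I_sets[unfolded I]]
  show "measure (nu p SV) A \<le> measure (distr (uniform_measure (DaC p r) I) (nu p SV) (\<lambda>\<omega>. restrict (Ystate \<omega>) SV)) A"
    unfolding nu_def SV
  proof (rule conditional_dominance[where g = "inner_weight Bs es us r" and K = ?K])
    show "(\<lambda>w. inner_weight Bs es us r w * ?K (space (PiM (Vedges Bs) (\<lambda>_. bern p))))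
        \<in> borel_measurable (PiM (Wedges Bs) (\<lambda>_. bern p))"
      by (rule factorisation(1)[OF sets.top])
    show "ennreal (measure (PiM (Vedges Bs) (\<lambda>_. bern p)) A) * ?K (space (PiM (Vedges Bs) (\<lambda>_. bern p))) \<le> ?K A"
      using cluster_weight_harris[OF assms(5-8) A incr[unfolded SV]] .
  qed (use prob_space_DaC Vedges_config_measurable I_sets assms(13) A factorisation(2) in \<open>auto simp: I\<close>)
qed

end
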